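(* Let $G$ be a graph with $\mathcal{P}(G)=\mathcal{T}(G)$. Then $G$ contains no induced subgraph that is a 2-plex on 4 vertices, and no induced cycle (hole) of length at least 4 whose length is not a multiple of 3.
   Context: All graphs are simple and connected. A 2-plex is a vertex set $K$ such that $G[K]$ has minimum degree at least $|K|-2$. A hole is an induced cycle of length at least 4. A co-2-plex is a vertex set inducing a subgraph of maximum degree at most 1. $\mathcal{P}(G)=\mathrm{conv}\{\chi^S : S\text{ co-2-plex of } G\}$. $\mathcal{T}(G)$ is the polytope of $x\in\mathbb{R}^V$ satisfying $0\le x\le 1$ and $x(W)+(|W|-1)x_w\le|W|$ for all $w\in V$ and $W\subseteq N(w)$, where $x(A)=\sum_{a\in A}x_a$. *)

theory Defs
  imports "HOL-Analysis.Analysis"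
begin

definition simple_connected_graph :: "('a::finite \<Rightarrow> 'a \<Rightarrow> bool) \<Rightarrow> bool" where
  "simple_connected_graph E \<longleftrightarrow>
     (\<forall>u v. E u v \<longrightarrow> E v u) \<and> (\<forall>v. \<not> E v v) \<and> (\<forall>u v. E\<^sup>*\<^sup>* u v)"

definition nbhd :: "('a \<Rightarrow> 'a \<Rightarrow> bool) \<Rightarrow> 'a \<Rightarrow> 'a set" where
  "nbhd E w = {u. E w u}"

definition two_plex :: "('a \<Rightarrow> 'a \<Rightarrow> bool) \<Rightarrow> 'a set \<Rightarrow> bool" where
  "two_plex E K \<longleftrightarrow> (\<forall>v\<in>K. card {u\<in>K. E v u} + 2 \<ge> card K)"

definition co_two_plex :: "('a \<Rightarrow> 'a \<Rightarrow> bool) \<Rightarrow> 'a set \<Rightarrow> bool" where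
  "co_two_plex E S \<longleftrightarrow> (\<forall>v\<in>S. card {u\<in>S. E v u} \<le> 1)"

definition charvec :: "'a::finite set \<Rightarrow> real ^ 'a" where
  "charvec S = (\<chi> v. if v \<in> S then 1 else 0)"

definition co2plex_polytope :: "('a::finite \<Rightarrow> 'a \<Rightarrow> bool) \<Rightarrow> (real ^ 'a) set" where
  "co2plex_polytope E = convex hull {charvec S | S. co_two_plex E S}"

definition T_polytope :: "('a::finite \<Rightarrow> 'a \<Rightarrow> bool) \<Rightarrow> (real ^ 'a) set" where
  "T_polytope E = {x. (\<forall>v. 0 \<le> x $ v \<and> x $ v \<le> 1) \<and>
     (\<forall>w W. W \<subseteq> nbhd E w \<longrightarrow>
        (\<Sum>a\<in>W. x $ a) + (real (card W) - 1) * x $ w \<le> real (card W))}"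

definition is_hole :: "('a \<Rightarrow> 'a \<Rightarrow> bool) \<Rightarrow> 'a list \<Rightarrow> bool" where
  "is_hole E cs \<longleftrightarrow> length cs \<ge> 4 \<and> distinct cs \<and>
     (\<forall>i<length cs. \<forall>j<length cs.
        E (cs ! i) (cs ! j) \<longleftrightarrow> (j = (i + 1) mod length cs \<or> i = (j + 1) mod length cs))"

end

theory Submission
  imports Defs
begin

text \<open>
  A co-2-plex contains at most 2 vertices of a 2-plex \<open>K\<close> on 4 vertices, and at most
  \<open>\<lfloor>2k/3\<rfloor>\<close> vertices of a hole of length \<open>k\<close>, since no three consecutive hole vertices
  can lie in it. These are therefore valid inequalities for \<open>\<P>(G)\<close>. On the other hand,
  the vector with value \<open>3/5\<close> on \<open>K\<close> (resp. \<open>2/3\<close> on the hole) and 0 elsewhere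
  lies in \<open>\<T>(G)\<close>, because every vertex of its support has at most 3 (resp. 2) neighbours
  in the support. Its total weight \<open>12/5\<close> (resp. \<open>2k/3\<close>) violates the valid inequality,
  unless \<open>3\<close> divides \<open>k\<close>.
\<close>

lemma uniform_weight_T_inequality:
  fixes t p m d :: real
  assumes "0 \<le> t" "t \<le> 1" "t * (2 * d - 1) \<le> d" "0 \<le> p" "p \<le> d" "p \<le> m"
  shows "t * p + (m - 1) * t \<le> m"
proof (cases "m \<le> d")
  case True
  have "t * p \<le> t * m" using assms by (simp add: mult_left_mono)
  then have "t * p + (m - 1) * t \<le> m * (2 * t - 1) + m - t" by (simp add: algebra_simps)
  also have "m * (2 * t - 1) \<le> t"
  proof (cases "2 * t \<le> 1")
    case True
    then show ?thesis using assms mult_nonneg_nonpos[of m "2*t-1"] by linarith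
  next
    case False
    then have "m * (2 * t - 1) \<le> d * (2 * t - 1)" using \<open>m \<le> d\<close> by (simp add: mult_right_mono)
    then show ?thesis using assms by (simp add: algebra_simps)
  qed
  then have "m * (2 * t - 1) + m - t \<le> m" by simp
  finally show ?thesis .
next
  case False
  have "t * p \<le> t * d" using assms by (simp add: mult_left_mono)
  then have "t * p + (m - 1) * t \<le> t * (2 * d - 1) + t * (m - d)" by (simp add: algebra_simps)
  also have "\<dots> \<le> d + (m - d)" using assms False by (intro add_mono mult_left_le_one_le) auto
  finally show ?thesis by simp
qed

lemma convex_sum_components_le: "convex {y :: real ^ 'a. (\<Sum>a\<in>A. y $ a) \<le> b}"
proof -
  have "{y :: real ^ 'a. (\<Sum>a\<in>A. y $ a) \<le> b} = {y. inner (\<Sum>a\<in>A. axis a 1) y \<le> b}"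
    by (simp add: inner_sum_right cart_eq_inner_axis inner_commute)
  then show ?thesis using convex_halfspace_le by metis
qed

lemma sum_charvec: "(\<Sum>a\<in>A. charvec S $ a) = real (card (S \<inter> A))"
  by (simp add: charvec_def sum.If_cases Int_commute Int_def)

lemma co2plex_polytope_sum_le:
  assumes "\<And>S. co_two_plex E S \<Longrightarrow> real (card (S \<inter> A)) \<le> b"
    and "y \<in> co2plex_polytope E"
  shows "(\<Sum>a\<in>A. y $ a) \<le> b"
proof -
  have "co2plex_polytope E \<subseteq> {y. (\<Sum>a\<in>A. y $ a) \<le> b}"
    unfolding co2plex_polytope_def
    by (rule hull_minimal) (use assms(1) convex_sum_components_le in \<open>auto simp: sum_charvec\<close>)
  with assms(2) show ?thesis by auto
qed

text \<open>The binding constraint is \<open>W = N(w) \<inter> A\<close> with \<open>|W| = d\<close>, giving \<open>t(2d - 1) \<le> d\<close>.\<close>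

lemma scaled_charvec_in_T_polytope:
  assumes "\<And>w. w \<in> A \<Longrightarrow> card (nbhd E w \<inter> A) \<le> d"
    and "0 \<le> t" "t \<le> 1" "t * (2 * real d - 1) \<le> real d"
  shows "t *\<^sub>R charvec A \<in> T_polytope E"
  unfolding T_polytope_def
proof (intro CollectI conjI allI impI)
  fix v
  show "0 \<le> (t *\<^sub>R charvec A) $ v" "(t *\<^sub>R charvec A) $ v \<le> 1"
    using assms by (auto simp: charvec_def)
next
  fix w W
  assume W: "W \<subseteq> nbhd E w"
  have sum_W: "(\<Sum>a\<in>W. (t *\<^sub>R charvec A) $ a) = t * real (card (A \<inter> W))"
    by (simp add: sum_distrib_left [symmetric] sum_charvec)
  have "card (A \<inter> W) \<le> card W" by (intro card_mono) auto
  show "(\<Sum>a\<in>W. (t *\<^sub>R charvec A) $ a) + (real (card W) - 1) * (t *\<^sub>R charvec A) $ w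
      \<le> real (card W)"
  proof (cases "w \<in> A")
    case True
    have "card (A \<inter> W) \<le> card (nbhd E w \<inter> A)" using W by (intro card_mono) auto
    with assms(1)[OF True] have "card (A \<inter> W) \<le> d" by linarith
    with \<open>card (A \<inter> W) \<le> card W\<close> True assms(2-4) show ?thesis
      unfolding sum_W by (simp add: charvec_def uniform_weight_T_inequality)
  next
    case False
    have "t * real (card (A \<inter> W)) \<le> real (card (A \<inter> W))"
      using assms(2,3) by (intro mult_left_le_one_le) auto
    with \<open>card (A \<inter> W) \<le> card W\<close> False show ?thesis
      unfolding sum_W by (simp add: charvec_def)
  qed
qed

lemma uniform_weight_le_co2plex_bound:
  fixes E :: "'a::finite \<Rightarrow> 'a \<Rightarrow> bool"
  assumes "T_polytope E \<subseteq> co2plex_polytope E"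
    and "\<And>w. w \<in> A \<Longrightarrow> card (nbhd E w \<inter> A) \<le> d"
    and "0 \<le> t" "t \<le> 1" "t * (2 * real d - 1) \<le> real d"
    and "\<And>S. co_two_plex E S \<Longrightarrow> real (card (S \<inter> A)) \<le> b"
  shows "t * real (card A) \<le> b"
proof -
  have "t *\<^sub>R charvec A \<in> co2plex_polytope E"
    using assms(1) scaled_charvec_in_T_polytope[OF assms(2-5)] by blast
  with assms(6) have "(\<Sum>a\<in>A. (t *\<^sub>R charvec A) $ a) \<le> b"
    by (rule co2plex_polytope_sum_le)
  then show ?thesis by (simp add: sum_distrib_left [symmetric] sum_charvec)
qed

lemma co_two_plex_unique_neighbour:
  fixes E :: "'a::finite \<Rightarrow> 'a \<Rightarrow> bool"
  assumes "co_two_plex E S" "v \<in> S" "p \<in> S" "q \<in> S" "E v p" "E v q"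
  shows "p = q"
proof -
  have "card {u\<in>S. E v u} \<le> 1" using assms(1,2) unfolding co_two_plex_def by blast
  moreover have "{p, q} \<subseteq> {u\<in>S. E v u}" using assms(3-6) by auto
  ultimately have "card {p, q} \<le> 1" using card_mono[of "{u\<in>S. E v u}" "{p, q}"] by simp
  then show ?thesis by (cases "p = q") auto
qed

lemma two_plex_card_4_adjacent:
  assumes "two_plex E K" "card K = 4" "\<forall>v. \<not> E v v"
    and "v \<in> K" "p \<in> K" "q \<in> K" "distinct [v, p, q]"
  shows "E v p \<or> E v q"
proof (rule ccontr)
  assume "\<not> (E v p \<or> E v q)"
  with assms(3) have "{u\<in>K. E v u} \<subseteq> K - {v, p, q}" by auto
  moreover have "finite K" using assms(2) by (simp add: card_ge_0_finite)
  ultimately have "card {u\<in>K. E v u} \<le> card (K - {v, p, q})" by (intro card_mono) auto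
  also have "\<dots> = 1" using assms(2,4-7) by (simp add: card_Diff_subset)
  finally show False using assms(1,2,4) unfolding two_plex_def by fastforce
qed

lemma card_co_two_plex_Int_two_plex:
  fixes E :: "'a::finite \<Rightarrow> 'a \<Rightarrow> bool"
  assumes "symp E" "\<forall>v. \<not> E v v" "two_plex E K" "card K = 4" "co_two_plex E S"
  shows "card (S \<inter> K) \<le> 2"
proof (rule ccontr)
  txt \<open>Three vertices of \<open>S \<inter> K\<close> would each be adjacent to exactly one of the other two,
    which no symmetric relation on three points allows.\<close>
  assume "\<not> card (S \<inter> K) \<le> 2"
  then have "3 \<le> card (S \<inter> K)" by simp
  then obtain T where "T \<subseteq> S \<inter> K" "card T = 3" by (rule obtain_subset_with_card_n)
  then obtain a b c where in_S: "a \<in> S" "b \<in> S" "c \<in> S" and in_K: "a \<in> K" "b \<in> K" "c \<in> K"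
    and distinct: "a \<noteq> b" "a \<noteq> c" "b \<noteq> c"
    by (auto simp: card_3_iff)
  have "E a b \<or> E a c" "E b a \<or> E b c" "E c a \<or> E c b"
    by (rule two_plex_card_4_adjacent[OF assms(3,4,2)]; use in_K distinct in simp)+
  moreover have "\<not> (E a b \<and> E a c)" "\<not> (E b a \<and> E b c)" "\<not> (E c a \<and> E c b)"
    using co_two_plex_unique_neighbour[OF assms(5)] in_S distinct by metis+
  moreover have "E b a = E a b" "E c a = E a c" "E c b = E b c"
    using assms(1) by (auto dest: sympD)
  ultimately show False by argo
qed

lemma sum_lessThan_shift_periodic:
  fixes s :: "nat \<Rightarrow> 'b::cancel_comm_monoid_add"
  assumes "\<And>i. s (i + k) = s i"
  shows "(\<Sum>i<k. s (i + j)) = (\<Sum>i<k. s i)"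
proof (induction j)
  case (Suc j)
  have "s (k + j) = s j" using assms[of j] by (simp add: add.commute)
  then have "(\<Sum>i<k. s (i + j)) + s j = (\<Sum>i<Suc k. s (i + j))" by simp
  also have "\<dots> = s j + (\<Sum>i<k. s (i + Suc j))"
    by (subst sum.lessThan_Suc_shift) simp
  finally show ?case using Suc.IH by (simp add: add.commute)
qed simp

definition cyc_nth :: "'a list \<Rightarrow> nat \<Rightarrow> 'a" where
  "cyc_nth cs i = cs ! (i mod length cs)"

lemma cyc_nth_add_length: "cyc_nth cs (i + length cs) = cyc_nth cs i"
  by (simp add: cyc_nth_def)

lemma hole_adjacent:
  assumes "is_hole E cs"
  shows "E (cyc_nth cs i) (cyc_nth cs (Suc i))" "E (cyc_nth cs (Suc i)) (cyc_nth cs i)"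
proof -
  have adj: "\<forall>i<length cs. \<forall>j<length cs.
      E (cs ! i) (cs ! j) \<longleftrightarrow> (j = Suc i mod length cs \<or> i = Suc j mod length cs)"
    and pos: "0 < length cs"
    using assms by (auto simp: is_hole_def)
  from pos have "i mod length cs < length cs" "Suc i mod length cs < length cs"
    by (rule mod_less_divisor)+
  moreover have "Suc i mod length cs = Suc (i mod length cs) mod length cs"
    by (simp add: mod_Suc_eq)
  ultimately show "E (cyc_nth cs i) (cyc_nth cs (Suc i))" "E (cyc_nth cs (Suc i)) (cyc_nth cs i)"
    using adj unfolding cyc_nth_def by simp_all
qed

lemma hole_nbhd_subset:
  assumes "is_hole E cs" "i < length cs"
  shows "nbhd E (cs ! i) \<inter> set cs \<subseteq> {cyc_nth cs (Suc i), cyc_nth cs (i + length cs - 1)}"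
proof
  fix u
  assume "u \<in> nbhd E (cs ! i) \<inter> set cs"
  then obtain j where j: "j < length cs" "u = cs ! j" "E (cs ! i) (cs ! j)"
    by (auto simp: in_set_conv_nth nbhd_def)
  with assms have "j = Suc i mod length cs \<or> i = Suc j mod length cs"
    unfolding is_hole_def by simp
  moreover have "j = (i + length cs - 1) mod length cs" if "i = Suc j mod length cs"
    using that j(1) by (cases "Suc j = length cs") auto
  ultimately show "u \<in> {cyc_nth cs (Suc i), cyc_nth cs (i + length cs - 1)}"
    using j(2) by (auto simp: cyc_nth_def)
qed

lemma card_hole_nbhd:
  assumes "is_hole E cs" "w \<in> set cs"
  shows "card (nbhd E w \<inter> set cs) \<le> 2"
proof -
  obtain i where "i < length cs" "w = cs ! i" using assms(2) by (auto simp: in_set_conv_nth)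
  then have "card (nbhd E w \<inter> set cs) \<le> card {cyc_nth cs (Suc i), cyc_nth cs (i + length cs - 1)}"
    using hole_nbhd_subset[OF assms(1)] by (intro card_mono) auto
  also have "\<dots> \<le> 2" by (simp add: card_insert_if)
  finally show ?thesis .
qed

lemma co_two_plex_hole_window:
  fixes E :: "'a::finite \<Rightarrow> 'a \<Rightarrow> bool"
  assumes "is_hole E cs" "co_two_plex E S"
  shows "\<not> (cyc_nth cs i \<in> S \<and> cyc_nth cs (Suc i) \<in> S \<and> cyc_nth cs (Suc (Suc i)) \<in> S)"
proof
  assume in_S: "cyc_nth cs i \<in> S \<and> cyc_nth cs (Suc i) \<in> S \<and> cyc_nth cs (Suc (Suc i)) \<in> S"
  have "length cs \<ge> 4" "distinct cs" using assms(1) by (auto simp: is_hole_def)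
  have "Suc (Suc i) mod length cs \<noteq> i mod length cs"
  proof
    assume "Suc (Suc i) mod length cs = i mod length cs"
    then have "length cs dvd 2" using mod_eq_dvd_iff_nat[of i "Suc (Suc i)"] by simp
    with \<open>length cs \<ge> 4\<close> show False by (auto dest: dvd_imp_le)
  qed
  moreover have "0 < length cs" using \<open>length cs \<ge> 4\<close> by linarith
  then have "i mod length cs < length cs" "Suc (Suc i) mod length cs < length cs"
    by (rule mod_less_divisor)+
  ultimately have "cyc_nth cs i \<noteq> cyc_nth cs (Suc (Suc i))"
    using \<open>distinct cs\<close> by (simp add: cyc_nth_def nth_eq_iff_index_eq)
  then show False
    using co_two_plex_unique_neighbour[OF assms(2)] hole_adjacent[OF assms(1), of i]
      hole_adjacent[OF assms(1), of "Suc i"] in_S by blast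
qed

lemma card_Int_set_eq_sum_cyc_nth:
  assumes "distinct cs"
  shows "card (S \<inter> set cs) = (\<Sum>i<length cs. if cyc_nth cs i \<in> S then 1 else 0)"
proof -
  have "card (S \<inter> set cs) = (\<Sum>v\<in>set cs. if v \<in> S then 1 else 0)"
    by (simp add: sum.If_cases Int_def conj_commute)
  also have "\<dots> = (\<Sum>i<length cs. if cs ! i \<in> S then 1 else 0)"
    using assms by (simp add: sum.distinct_set_conv_list sum_list_sum_nth atLeast0LessThan)
  also have "\<dots> = (\<Sum>i<length cs. if cyc_nth cs i \<in> S then 1 else 0)"
    by (simp add: cyc_nth_def)
  finally show ?thesis .
qed

lemma card_co_two_plex_Int_hole:
  fixes E :: "'a::finite \<Rightarrow> 'a \<Rightarrow> bool"
  assumes "is_hole E cs" "co_two_plex E S"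
  shows "3 * card (S \<inter> set cs) \<le> 2 * length cs"
proof -
  define s :: "nat \<Rightarrow> nat" where "s i = (if cyc_nth cs i \<in> S then 1 else 0)" for i
  have periodic: "s (i + length cs) = s i" for i
    by (simp add: s_def cyc_nth_add_length)
  have window: "s i + s (i + 1) + s (i + 2) \<le> 2" for i
    using co_two_plex_hole_window[OF assms, of i] by (simp add: s_def numeral_2_eq_2)
  have "(\<Sum>i<length cs. s i + s (i + 1) + s (i + 2)) \<le> (\<Sum>i<length cs. 2)"
    by (intro sum_mono window)
  also have "\<dots> = 2 * length cs" by simp
  finally have "(\<Sum>i<length cs. s i + s (i + 1) + s (i + 2)) \<le> 2 * length cs" .
  moreover have "(\<Sum>i<length cs. s i + s (i + 1) + s (i + 2)) = 3 * (\<Sum>i<length cs. s i)"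
    using sum_lessThan_shift_periodic[where s = s, OF periodic, of 1]
      sum_lessThan_shift_periodic[where s = s, OF periodic, of 2]
    by (simp add: sum.distrib)
  moreover have "card (S \<inter> set cs) = (\<Sum>i<length cs. s i)"
    using assms(1) by (simp add: s_def card_Int_set_eq_sum_cyc_nth is_hole_def)
  ultimately show ?thesis by linarith
qed

lemma two_plex_card_ne_4:
  fixes E :: "'a::finite \<Rightarrow> 'a \<Rightarrow> bool"
  assumes "symp E" "\<forall>v. \<not> E v v" "T_polytope E \<subseteq> co2plex_polytope E" "two_plex E K"
  shows "card K \<noteq> 4"
proof
  assume card_K: "card K = 4"
  have "3 / 5 * real (card K) \<le> 2"
  proof (rule uniform_weight_le_co2plex_bound[OF assms(3), where d = 3])
    fix w
    assume "w \<in> K"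
    with assms(2) have "nbhd E w \<inter> K \<subseteq> K - {w}" by (auto simp: nbhd_def)
    then have "card (nbhd E w \<inter> K) \<le> card (K - {w})" by (intro card_mono) auto
    with \<open>w \<in> K\<close> card_K show "card (nbhd E w \<inter> K) \<le> 3" by simp
  next
    fix S
    assume "co_two_plex E S"
    with card_co_two_plex_Int_two_plex[OF assms(1,2,4) card_K]
    show "real (card (S \<inter> K)) \<le> 2" by simp
  qed simp_all
  with card_K show False by simp
qed

lemma hole_length_dvd_3:
  fixes E :: "'a::finite \<Rightarrow> 'a \<Rightarrow> bool"
  assumes "T_polytope E \<subseteq> co2plex_polytope E" "is_hole E cs"
  shows "3 dvd length cs"
proof (rule ccontr)
  assume not_dvd: "\<not> 3 dvd length cs"
  have "2 / 3 * real (card (set cs)) \<le> (2 * real (length cs) - 1) / 3"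
  proof (rule uniform_weight_le_co2plex_bound[OF assms(1), where d = 2])
    show "card (nbhd E w \<inter> set cs) \<le> 2" if "w \<in> set cs" for w
      using card_hole_nbhd[OF assms(2) that] .
  next
    fix S
    assume "co_two_plex E S"
    then have "3 * card (S \<inter> set cs) \<le> 2 * length cs"
      by (rule card_co_two_plex_Int_hole[OF assms(2)])
    with not_dvd have "3 * card (S \<inter> set cs) + 1 \<le> 2 * length cs" by presburger
    then have "real (3 * card (S \<inter> set cs) + 1) \<le> real (2 * length cs)" by (rule of_nat_mono)
    then show "real (card (S \<inter> set cs)) \<le> (2 * real (length cs) - 1) / 3" by simp
  qed simp_all
  moreover have "card (set cs) = length cs"
    using assms(2) by (simp add: is_hole_def distinct_card)
  ultimately show False by simp
qed

theorem mainTheorem13: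
  fixes E :: "'a::finite \<Rightarrow> 'a \<Rightarrow> bool"
  assumes "simple_connected_graph E"
    and "co2plex_polytope E = T_polytope E"
  shows "(\<nexists>K. card K = 4 \<and> two_plex E K) \<and>
         (\<nexists>cs. is_hole E cs \<and> \<not> (3 dvd length cs))"
proof -
  have "symp E" "\<forall>v. \<not> E v v"
    using assms(1) unfolding simple_connected_graph_def symp_def by auto
  moreover have "T_polytope E \<subseteq> co2plex_polytope E" using assms(2) by simp
  ultimately show ?thesis using two_plex_card_ne_4 hole_length_dvd_3 by blast
qed

end
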